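(* Let $d\ge1$ and suppose a set of $d$ elements (a gap) is partitioned into $\ell$ nonempty intervals $I_1,\dots,I_\ell$, consecutive by rank, and that for some $0\le p\le \ell$ the intervals $I_1,\dots,I_p$ are designated left-side and $I_{p+1},\dots,I_\ell$ right-side. Suppose the following balance condition holds: for every left-side interval $I_j$ with $j<p$, the number of elements in $I_1\cup\dots\cup I_{j-1}$ is strictly less than $|I_j|+|I_{j+1}|$; and symmetrically, for every right-side interval $I_j$ with $j>p+1$, the number of elements in $I_{j+1}\cup\dots\cup I_\ell$ is strictly less than $|I_j|+|I_{j-1}|$. Then $\ell\le 4\log(d)$.
   Context: $\log(x):=\max(\log_2 x,1)$, with $\log_2$ the binary logarithm. The balance condition is the negation of the merging rule: a left-side interval that is not the rightmost left-side interval is merged into its right neighbour when the number of elements left of it in the gap is at least the sum of its size and its right neighbour's size (and symmetrically on the right side). *)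

theory Defs
  imports Complex_Main
begin

text \<open>The paper's log: log(x) = max(log_2 x, 1).\<close>
definition Log :: "real \<Rightarrow> real" where
  "Log x = max (log 2 x) 1"

text \<open>The gap is modelled as the ranks {0..<d}; a partition into l consecutive
nonempty intervals is given by boundaries b 0 = 0 < b 1 < ... < b l = d,
with interval I_j = {b (j-1) ..< b j} for j = 1..l.\<close>
definition interval :: "(nat \<Rightarrow> nat) \<Rightarrow> nat \<Rightarrow> nat set" where
  "interval b j = {b (j - 1) ..< b j}"

end

theory Submission
  imports Defs
begin

text \<open>Let \<open>b j\<close> be the number of elements left of the boundary between \<open>I\<^sub>j\<close> and \<open>I\<^sub>j\<^sub>+\<^sub>1\<close>.
  The left balance condition says \<open>b (j - 1) < b (j + 1) - b (j - 1)\<close>, i.e. the prefix length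
  \<open>b\<close> at least doubles every two steps, so \<open>2 ^ (p - 1) \<le> b p ^ 2\<close>; symmetrically the suffix
  \<open>d - b p\<close> satisfies \<open>2 ^ (l - p - 1) \<le> (d - b p) ^ 2\<close>. Multiplying, and using
  \<open>4 x y \<le> (x + y) ^ 2\<close>, gives \<open>2 ^ l \<le> d ^ 4\<close>.\<close>

lemma pow2_le_square_if_doubling_every_other:
  fixes f :: "nat \<Rightarrow> nat"
  assumes "f 0 = 0"
    and increasing: "\<And>j. 1 \<le> j \<Longrightarrow> j \<le> p \<Longrightarrow> f (j - 1) < f j"
    and doubling: "\<And>j. 1 \<le> j \<Longrightarrow> j < p \<Longrightarrow> 2 * f (j - 1) < f (j + 1)"
    and "1 \<le> j" "j \<le> p"
  shows "2 ^ (j - 1) \<le> f j ^ 2"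
  using assms(4,5)
proof (induction j rule: less_induct)
  case (less j)
  consider "j = 1" | "j = 2" | "j > 2" using less.prems by linarith
  then show ?case
  proof cases
    case 1
    then show ?thesis using less.prems increasing[of 1] \<open>f 0 = 0\<close> by simp
  next
    case 2
    have "1 \<le> f 1" "f 1 < f 2" using less.prems increasing[of 1] increasing[of 2] \<open>f 0 = 0\<close> 2 by simp_all
    then have "2 ^ 2 \<le> f 2 ^ 2" by (intro power_mono) simp_all
    then show ?thesis using 2 by simp
  next
    case 3
    have IH: "2 ^ (j - 3) \<le> f (j - 2) ^ 2"
      using less.IH[of "j - 2"] less.prems 3 by (simp add: numeral_3_eq_3)
    have "2 * f (j - 2) < f j" using doubling[of "j - 1"] less.prems 3 by (simp add: numeral_2_eq_2)
    then have "(2 * f (j - 2)) ^ 2 \<le> f j ^ 2" by (intro power_mono) simp_all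
    moreover have "(2::nat) ^ (j - 1) = 4 * 2 ^ (j - 3)"
    proof -
      have "j - 1 = Suc (Suc (j - 3))" using 3 by simp
      then show ?thesis by simp
    qed
    ultimately show ?thesis using IH by (simp add: power_mult_distrib)
  qed
qed

lemma pow2_le_fourth_power_of_square:
  fixes y :: nat
  assumes "2 ^ (q - 1) \<le> y ^ 2" and "2 \<le> q"
  shows "2 ^ q \<le> y ^ 4"
proof -
  have "(2::nat) ^ q \<le> 2 ^ ((q - 1) * 2)" using \<open>2 \<le> q\<close> by (intro power_increasing) auto
  also have "\<dots> = (2 ^ (q - 1)) ^ 2" by (rule power_mult)
  also have "\<dots> \<le> (y ^ 2) ^ 2" using assms(1) by (intro power_mono) simp_all
  finally show ?thesis by (simp flip: power_mult)
qed

lemma pow2_le_fourth_power_of_sum: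
  fixes x y :: nat
  assumes x: "1 \<le> p \<Longrightarrow> 2 ^ (p - 1) \<le> x ^ 2"
    and y: "1 \<le> q \<Longrightarrow> 2 ^ (q - 1) \<le> y ^ 2"
    and "2 \<le> p + q"
  shows "2 ^ (p + q) \<le> (x + y) ^ 4"
proof -
  consider "p = 0" | "q = 0" | "1 \<le> p" "1 \<le> q" by linarith
  then show ?thesis
  proof cases
    case 1
    then have "2 ^ (p + q) \<le> y ^ 4" using y pow2_le_fourth_power_of_square \<open>2 \<le> p + q\<close> by simp
    also have "\<dots> \<le> (x + y) ^ 4" by (intro power_mono) simp_all
    finally show ?thesis .
  next
    case 2
    then have "2 ^ (p + q) \<le> x ^ 4" using x pow2_le_fourth_power_of_square \<open>2 \<le> p + q\<close> by simp
    also have "\<dots> \<le> (x + y) ^ 4" by (intro power_mono) simp_all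
    finally show ?thesis .
  next
    case 3
    have am_gm: "4 * (x * y) \<le> (x + y) ^ 2"
    proof -
      have "int (4 * (x * y)) \<le> int ((x + y) ^ 2)"
        using zero_le_power2[of "int x - int y"] by (simp add: power2_eq_square algebra_simps)
      then show ?thesis by linarith
    qed
    have "(2::nat) ^ (p + q) \<le> 2 ^ ((p - 1) + (q - 1) + 4)" using 3 by (intro power_increasing) auto
    also have "\<dots> = 16 * (2 ^ (p - 1) * 2 ^ (q - 1))" by (simp add: power_add)
    also have "\<dots> \<le> 16 * (x ^ 2 * y ^ 2)" using x y 3 by (simp add: mult_mono)
    also have "\<dots> = (4 * (x * y)) ^ 2" by (simp add: power_mult_distrib)
    also have "\<dots> \<le> ((x + y) ^ 2) ^ 2" using am_gm by (intro power_mono) simp_all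
    finally show ?thesis by (simp flip: power_mult)
  qed
qed

lemma le_4_Log_if_pow2_le_fourth_power:
  fixes l d :: nat
  assumes "2 ^ l \<le> d ^ 4"
  shows "real l \<le> 4 * Log (real d)"
proof -
  have "d > 0" using assms by (cases d) auto
  have "(2::real) ^ l \<le> real d ^ 4" using assms by (metis of_nat_le_iff of_nat_numeral of_nat_power)
  then have "log 2 ((2::real) ^ l) \<le> log 2 (real d ^ 4)"
    using \<open>d > 0\<close> by (subst log_le_cancel_iff) auto
  then have "real l \<le> 4 * log 2 (real d)" using \<open>d > 0\<close> by (simp add: log_nat_power)
  then show ?thesis unfolding Log_def by linarith
qed

locale interval_partition =
  fixes b :: "nat \<Rightarrow> nat" and l :: nat
  assumes boundary_less: "\<And>j. 1 \<le> j \<Longrightarrow> j \<le> l \<Longrightarrow> b (j - 1) < b j"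
begin

lemma boundary_mono:
  assumes "i \<le> k" "k \<le> l"
  shows "b i \<le> b k"
  using assms
proof (induction k rule: dec_induct)
  case (step n)
  then show ?case using boundary_less[of "Suc n"] by simp
qed simp

lemma card_interval: "card (interval b j) = b j - b (j - 1)"
  by (simp add: interval_def)

lemma UN_interval_eq:
  assumes "m \<le> n" "n \<le> l"
  shows "(\<Union>i\<in>{m<..n}. interval b i) = {b m..<b n}"
  using assms
proof (induction n rule: dec_induct)
  case (step n)
  have "{m<..Suc n} = insert (Suc n) {m<..n}" using step.hyps by auto
  moreover have "b m \<le> b n" "b n < b (Suc n)"
    using boundary_mono step boundary_less[of "Suc n"] by simp_all
  ultimately show ?case using step by (auto simp: interval_def)
qed simp

lemma prefix_growth:
  assumes "b 0 = 0" "p \<le> l"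
    and left: "\<And>j. 1 \<le> j \<Longrightarrow> j < p \<Longrightarrow>
        card (\<Union>i\<in>{1..<j}. interval b i) < card (interval b j) + card (interval b (j + 1))"
    and "1 \<le> p"
  shows "2 ^ (p - 1) \<le> b p ^ 2"
proof (rule pow2_le_square_if_doubling_every_other[where f = b and p = p])
  fix j assume "1 \<le> j" "j \<le> p"
  then show "b (j - 1) < b j" using boundary_less \<open>p \<le> l\<close> by simp
next
  fix j assume j: "1 \<le> j" "j < p"
  have "{1..<j} = {0<..j - 1}" using j by auto
  then have "card (\<Union>i\<in>{1..<j}. interval b i) = b (j - 1)"
    using UN_interval_eq[of 0 "j - 1"] j \<open>p \<le> l\<close> \<open>b 0 = 0\<close> by simp
  moreover have "b (j - 1) \<le> b j" "b j \<le> b (j + 1)" using boundary_mono j \<open>p \<le> l\<close> by simp_all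
  ultimately show "2 * b (j - 1) < b (j + 1)" using left[OF j] by (simp add: card_interval)
qed (use assms in simp_all)

lemma suffix_growth:
  assumes "b l = d" "p \<le> l"
    and right: "\<And>j. p + 1 < j \<Longrightarrow> j \<le> l \<Longrightarrow>
        card (\<Union>i\<in>{j<..l}. interval b i) < card (interval b j) + card (interval b (j - 1))"
    and "1 \<le> l - p"
  shows "2 ^ (l - p - 1) \<le> (d - b p) ^ 2"
proof -
  define c where "c k = d - b (l - k)" for k
  have "2 ^ (l - p - 1) \<le> c (l - p) ^ 2"
  proof (rule pow2_le_square_if_doubling_every_other[where f = c and p = "l - p"])
    fix k assume k: "1 \<le> k" "k \<le> l - p"
    then have index: "l - (k - 1) = Suc (l - k)" by simp
    have "b (l - k) < b (Suc (l - k))" "b (Suc (l - k)) \<le> d"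
      using boundary_less[of "Suc (l - k)"] boundary_mono[of "Suc (l - k)" l] \<open>b l = d\<close> k by simp_all
    then show "c (k - 1) < c k" unfolding c_def index by linarith
  next
    fix k assume k: "1 \<le> k" "k < l - p"
    define j where "j = l - k + 1"
    have j: "p + 1 < j" "j \<le> l" using k j_def by auto
    have "card (\<Union>i\<in>{j<..l}. interval b i) = d - b j"
      using UN_interval_eq[of j l] j \<open>b l = d\<close> by simp
    moreover have "b (j - 2) \<le> b (j - 1)" "b (j - 1) \<le> b j" "b j \<le> d"
      using boundary_mono[of "j - 2" "j - 1"] boundary_mono[of "j - 1" j] boundary_mono[of j l] j \<open>b l = d\<close>
      by simp_all
    moreover have "c (k - 1) = d - b j" "c (k + 1) = d - b (j - 2)"
      unfolding c_def j_def using k by (simp_all add: Suc_diff_le)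
    ultimately show "2 * c (k - 1) < c (k + 1)"
      using right[OF j] by (simp add: card_interval numeral_2_eq_2) linarith
  qed (use assms c_def in simp_all)
  then show ?thesis using \<open>p \<le> l\<close> by (simp add: c_def)
qed

end

theorem lemma6p2:
  fixes d l p :: nat and b :: "nat \<Rightarrow> nat"
  assumes "d \<ge> 1"
    and "b 0 = 0" and "b l = d"
    and "\<And>j. 1 \<le> j \<Longrightarrow> j \<le> l \<Longrightarrow> b (j - 1) < b j"
    and "p \<le> l"
    and left: "\<And>j. 1 \<le> j \<Longrightarrow> j < p \<Longrightarrow>
        card (\<Union>i\<in>{1..<j}. interval b i) < card (interval b j) + card (interval b (j + 1))"
    and right: "\<And>j. p + 1 < j \<Longrightarrow> j \<le> l \<Longrightarrow>
        card (\<Union>i\<in>{j<..l}. interval b i) < card (interval b j) + card (interval b (j - 1))"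
  shows "real l \<le> 4 * Log (real d)"
proof (cases "l < 2")
  case True
  then show ?thesis unfolding Log_def by simp
next
  case False
  interpret interval_partition b l using assms(4) by unfold_locales
  have "d = b p + (d - b p)" using boundary_mono[of p l] assms(3,5) by simp
  moreover have "2 ^ (p + (l - p)) \<le> (b p + (d - b p)) ^ 4"
    using prefix_growth[OF assms(2,5) left] suffix_growth[OF assms(3,5) right] False
    by (intro pow2_le_fourth_power_of_sum) simp_all
  ultimately have "2 ^ l \<le> d ^ 4" using assms(5) by simp
  then show ?thesis by (rule le_4_Log_if_pow2_le_fourth_power)
qed

end
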